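(* Let $H$ be an infinite-dimensional real Hilbert space. Then for every integer $m\ge1$ and every $\alpha\in(0,1]$, $$\tfrac12 m^{-\alpha/2}\le \gamma^o_m(\alpha,H)\le m^{-\alpha/2}.$$
   Context: A (symmetric) dictionary in $H$ is a set $\mathcal D$ of unit vectors with dense span and $g\in\mathcal D\Rightarrow -g\in\mathcal D$. $A_1(\mathcal D)$ is the closed convex hull of $\mathcal D$ and $\|f\|_{A_1(\mathcal D)}:=\inf\{M:f/M\in A_1(\mathcal D)\}$. Orthogonal Greedy Algorithm (OGA): for $h\in H$ let $g(h)\in\mathcal D$ maximize $\langle h,g\rangle$ over $\mathcal D$ (assumed to exist); $f^o_0:=f$, $G^o_0:=0$, and for $m\ge1$, $G^o_m(f,\mathcal D)$ is the orthogonal projection of $f$ onto $\operatorname{span}\{g(f^o_0),\dots,g(f^o_{m-1})\}$ and $f^o_m:=f-G^o_m(f,\mathcal D)$. For $\alpha\in(0,1]$, $$\gamma^o_m(\alpha,H):=\sup\frac{\|f-G^o_m(f,\mathcal D)\|}{\|f\|^{1-\alpha}\|f\|_{A_1(\mathcal D)}^{\alpha}},$$ supremum over all dictionaries $\mathcal D$, all $f\ne0$ with $\|f\|_{A_1(\mathcal D)}<\infty$, and all possible realizations of the OGA. *)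

theory Defs
  imports "HOL-Analysis.Analysis"
begin

definition dictionary :: "'a::real_inner set \<Rightarrow> bool" where
  "dictionary D \<longleftrightarrow> (\<forall>g\<in>D. norm g = 1) \<and> closure (span D) = UNIV \<and> (\<forall>g\<in>D. - g \<in> D)"

definition A1 :: "'a::real_inner set \<Rightarrow> 'a set" where
  "A1 D = closure (convex hull D)"

text \<open>Gauge norm of A_1(D), as an extended real (infinite if no admissible M exists).\<close>
definition A1_norm :: "'a::real_inner set \<Rightarrow> 'a \<Rightarrow> ereal" where
  "A1_norm D f = Inf (ereal ` {M. M > 0 \<and> f /\<^sub>R M \<in> A1 D})"

definition orth_proj :: "'a::real_inner set \<Rightarrow> 'a \<Rightarrow> 'a" where
  "orth_proj S f = (THE p. p \<in> S \<and> (\<forall>v\<in>S. inner (f - p) v = 0))"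

definition OGA_approx :: "'a::real_inner \<Rightarrow> (nat \<Rightarrow> 'a) \<Rightarrow> nat \<Rightarrow> 'a" where
  "OGA_approx f g k = orth_proj (span (g ` {..<k})) f"

definition OGA_realization :: "'a::real_inner set \<Rightarrow> 'a \<Rightarrow> nat \<Rightarrow> (nat \<Rightarrow> 'a) \<Rightarrow> bool" where
  "OGA_realization D f m g \<longleftrightarrow>
     (\<forall>k<m. g k \<in> D \<and> (\<forall>h\<in>D. inner (f - OGA_approx f g k) h \<le> inner (f - OGA_approx f g k) (g k)))"

definition gamma_o :: "nat \<Rightarrow> real \<Rightarrow> 'a::{real_inner,complete_space} itself \<Rightarrow> ereal" where
  "gamma_o m \<alpha> _ = Sup {ereal (norm (f - OGA_approx f g m) /
        (norm f powr (1 - \<alpha>) * real_of_ereal (A1_norm D f) powr \<alpha>)) | D f g.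
        dictionary D \<and> (f::'a) \<noteq> 0 \<and> A1_norm D f < \<infinity> \<and> OGA_realization D f m g}"

end

theory Submission
  imports Defs
begin

text \<open>
  Let \<open>r\<^sub>k = f - G\<^sub>k\<close> and let \<open>M > 0\<close> with \<open>f/M \<in> A\<^sub>1(D)\<close>. Since \<open>r\<^sub>k \<perp> G\<^sub>k\<close>,
  the greedy choice gives \<open>\<langle>r\<^sub>k, g\<^sub>k\<rangle> \<ge> \<langle>r\<^sub>k, f\<rangle>/M = |r\<^sub>k|\<^sup>2/M\<close>, and projecting onto the
  enlarged span does at least as well as \<open>r\<^sub>k - \<langle>r\<^sub>k, g\<^sub>k\<rangle> g\<^sub>k\<close>. Hence \<open>a\<^sub>k = |r\<^sub>k|\<^sup>2\<close> obeys
  \<open>a\<^sub>k\<^sub>+\<^sub>1 \<le> a\<^sub>k - a\<^sub>k\<^sup>2/M\<^sup>2\<close>, so \<open>a\<^sub>m \<le> M\<^sup>2/(m+1)\<close>; interpolating with \<open>|r\<^sub>m| \<le> |f|\<close> gives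
  \<open>|r\<^sub>m| \<le> |f|\<^bsup>1-\<alpha>\<^esup> M\<^sup>\<alpha> m\<^bsup>-\<alpha>/2\<^esup>\<close>, which passes to the infimum \<open>|f|\<^sub>A\<^sub>1\<close> of all such \<open>M\<close>.

  In infinite dimension there are orthonormal \<open>e\<^sub>0, \<dots>, e\<^sub>2\<^sub>m\<^sub>-\<^sub>1\<close>. Take the
  dictionary of all \<open>\<plusminus>e\<^sub>i\<close> and all unit vectors orthogonal to every \<open>e\<^sub>i\<close>, and
  \<open>f = \<Sum> e\<^sub>i\<close>. The OGA may pick \<open>e\<^sub>0, \<dots>, e\<^sub>m\<^sub>-\<^sub>1\<close>, leaving a residual of norm \<open>\<surd>m\<close>, while
  \<open>|f| = \<surd>(2m)\<close> and \<open>|f|\<^sub>A\<^sub>1 \<le> 2m\<close>; the ratio is then at least \<open>2\<^bsup>-(1+\<alpha>)/2\<^esup> m\<^bsup>-\<alpha>/2\<^esup>\<close>.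
\<close>

section \<open>Orthonormal families and orthogonal projection onto finite spans\<close>

definition orthonormal_family :: "nat \<Rightarrow> (nat \<Rightarrow> 'a::real_inner) \<Rightarrow> bool" where
  "orthonormal_family n e \<longleftrightarrow> (\<forall>i<n. \<forall>j<n. inner (e i) (e j) = (if i = j then 1 else 0))"

lemma orthonormal_family_mono:
  "orthonormal_family n e \<Longrightarrow> k \<le> n \<Longrightarrow> orthonormal_family k e"
  unfolding orthonormal_family_def by simp

lemma orthonormal_family_norm:
  "orthonormal_family n e \<Longrightarrow> i < n \<Longrightarrow> norm (e i) = 1"
  unfolding orthonormal_family_def by (simp add: norm_eq_sqrt_inner)

lemma inner_sum_orthonormal:
  assumes "orthonormal_family n e" "I \<subseteq> {..<n}" "j < n"
  shows "inner (\<Sum>i\<in>I. c i *\<^sub>R e i) (e j) = (if j \<in> I then c j else 0)"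
proof -
  have "finite I" using assms(2) finite_subset by blast
  have "inner (\<Sum>i\<in>I. c i *\<^sub>R e i) (e j) = (\<Sum>i\<in>I. if i = j then c i else 0)"
    unfolding inner_sum_left
    by (rule sum.cong) (use assms in \<open>auto simp: orthonormal_family_def\<close>)
  also have "\<dots> = (if j \<in> I then c j else 0)"
    using \<open>finite I\<close> by (simp add: sum.delta')
  finally show ?thesis .
qed

lemma orth_proj_eqI:
  assumes "subspace V" "p \<in> V" "\<And>v. v \<in> V \<Longrightarrow> inner (f - p) v = 0"
  shows "orth_proj V f = p"
  unfolding orth_proj_def
proof (rule the_equality)
  show "p \<in> V \<and> (\<forall>v\<in>V. inner (f - p) v = 0)" using assms by blast
next
  fix q assume q: "q \<in> V \<and> (\<forall>v\<in>V. inner (f - q) v = 0)"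
  then have "p - q \<in> V" using assms by (simp add: subspace_diff)
  then have "inner ((f - q) - (f - p)) (p - q) = 0"
    using q assms(3) by (simp add: inner_diff_left)
  then show "q = p" by simp
qed

lemma orthonormal_residual_orthogonal:
  assumes "orthonormal_family n e" "v \<in> span (e ` {..<n})"
  shows "inner (x - (\<Sum>i<n. inner x (e i) *\<^sub>R e i)) v = 0"
proof -
  have "orthogonal (x - (\<Sum>i<n. inner x (e i) *\<^sub>R e i)) (e j)" if "j < n" for j
    using inner_sum_orthonormal[OF assms(1) order_refl that]
    by (simp add: orthogonal_def inner_diff_left that)
  then show ?thesis
    using orthogonal_to_span[OF assms(2)] unfolding orthogonal_def by blast
qed

lemma orth_proj_orthonormal:
  assumes "orthonormal_family n e"
  shows "orth_proj (span (e ` {..<n})) x = (\<Sum>i<n. inner x (e i) *\<^sub>R e i)"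
  by (rule orth_proj_eqI[OF subspace_span _ orthonormal_residual_orthogonal[OF assms]])
    (intro span_sum span_scale span_base; simp)

lemma orthonormal_family_extend:
  assumes e: "orthonormal_family n e" and x: "x \<notin> span (e ` {..<n})"
  obtains u where "orthonormal_family (Suc n) (e(n := u))"
    and "span ((e(n := u)) ` {..<Suc n}) = span (insert x (e ` {..<n}))"
proof
  let ?E = "e ` {..<n}"
  define r where "r = x - orth_proj (span ?E) x"
  define u where "u = r /\<^sub>R norm r"
  have p: "orth_proj (span ?E) x \<in> span ?E"
    unfolding orth_proj_orthonormal[OF e] by (intro span_sum span_scale span_base) auto
  have "r \<noteq> 0" using x p by (auto simp: r_def)
  have "inner r (e j) = 0" if "j < n" for j
    unfolding r_def orth_proj_orthonormal[OF e]
    by (rule orthonormal_residual_orthogonal[OF e]) (simp add: span_base that)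
  then have ue: "inner u (e j) = 0" "inner (e j) u = 0" if "j < n" for j
    using that by (auto simp: u_def inner_commute)
  have "norm u = 1" using \<open>r \<noteq> 0\<close> by (simp add: u_def)
  then have "inner u u = 1" by (simp add: norm_eq_sqrt_inner)
  with e ue show "orthonormal_family (Suc n) (e(n := u))"
    unfolding orthonormal_family_def by (auto simp: less_Suc_eq)
  have "span (insert u ?E) = span (insert r ?E)"
  proof -
    have "r = norm r *\<^sub>R u" using \<open>r \<noteq> 0\<close> by (simp add: u_def)
    then have "r \<in> span (insert u ?E)" by (metis insertI1 span_base span_scale)
    moreover have "u \<in> span (insert r ?E)" unfolding u_def by (intro span_scale span_base) simp
    ultimately show ?thesis unfolding span_eq by (auto intro: span_base)
  qed
  also have "\<dots> = span (insert x ?E)"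
    by (rule eq_span_insert_eq) (simp add: r_def p span_neg)
  finally have "span (insert u ?E) = span (insert x ?E)" .
  moreover have "(e(n := u)) ` {..<Suc n} = insert u ?E"
    by (auto simp: lessThan_Suc)
  ultimately show "span ((e(n := u)) ` {..<Suc n}) = span (insert x ?E)"
    by simp
qed

lemma orthonormal_family_spanning:
  fixes S :: "'a::real_inner set"
  assumes "finite S"
  shows "\<exists>n e. orthonormal_family n e \<and> span (e ` {..<n}) = span S"
  using assms
proof (induction rule: finite_induct)
  case empty
  show ?case by (rule exI[of _ 0]) (simp add: orthonormal_family_def)
next
  case (insert a S)
  then obtain n e where e: "orthonormal_family n e" "span (e ` {..<n}) = span S" by blast
  show ?case
  proof (cases "a \<in> span S")
    case True
    then show ?thesis using e by (metis span_redundant)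
  next
    case False
    with e obtain u where "orthonormal_family (Suc n) (e(n := u))"
      "span ((e(n := u)) ` {..<Suc n}) = span (insert a (e ` {..<n}))"
      by (metis orthonormal_family_extend)
    moreover have "span (insert a (e ` {..<n})) = span (insert a S)"
      using e(2) by (simp add: span_insert)
    ultimately show ?thesis by metis
  qed
qed

lemma orthonormal_family_exists:
  assumes "\<not> (\<exists>S::'a::real_inner set. finite S \<and> span S = UNIV)"
  shows "\<exists>e::nat \<Rightarrow> 'a. orthonormal_family n e"
proof (induction n)
  case 0
  show ?case by (simp add: orthonormal_family_def)
next
  case (Suc n)
  then obtain e :: "nat \<Rightarrow> 'a" where e: "orthonormal_family n e" by blast
  have "span (e ` {..<n}) \<noteq> UNIV" using assms by blast
  then obtain x where "x \<notin> span (e ` {..<n})" by blast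
  with e show ?case by (metis orthonormal_family_extend)
qed

lemma orth_proj_span:
  fixes f :: "'a::real_inner"
  assumes "finite S"
  shows "orth_proj (span S) f \<in> span S"
    and "v \<in> span S \<Longrightarrow> inner (f - orth_proj (span S) f) v = 0"
proof -
  obtain n e where e: "orthonormal_family n e" "span (e ` {..<n}) = span S"
    using orthonormal_family_spanning[OF assms] by blast
  show "orth_proj (span S) f \<in> span S"
    unfolding e(2)[symmetric] orth_proj_orthonormal[OF e(1)]
    by (intro span_sum span_scale span_base) auto
  show "inner (f - orth_proj (span S) f) v = 0" if "v \<in> span S"
    using that unfolding e(2)[symmetric] orth_proj_orthonormal[OF e(1)]
    by (rule orthonormal_residual_orthogonal[OF e(1)])
qed

lemma orth_proj_span_nearest:
  fixes f :: "'a::real_inner"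
  assumes "finite S" "q \<in> span S"
  shows "norm (f - orth_proj (span S) f) \<le> norm (f - q)"
proof -
  let ?p = "orth_proj (span S) f"
  have "?p - q \<in> span S" using orth_proj_span(1)[OF assms(1)] assms(2) by (rule span_diff)
  then have "orthogonal (f - ?p) (?p - q)"
    unfolding orthogonal_def by (rule orth_proj_span(2)[OF assms(1)])
  then have "(norm (f - q))\<^sup>2 = (norm (f - ?p))\<^sup>2 + (norm (?p - q))\<^sup>2"
    using norm_add_Pythagorean by fastforce
  then show ?thesis by (simp add: power2_le_imp_le)
qed

section \<open>Convergence rate of the orthogonal greedy algorithm\<close>

lemma A1_subset_cball:
  assumes "dictionary D"
  shows "A1 D \<subseteq> cball 0 1"
proof -
  have "convex hull D \<subseteq> cball 0 1"
    using assms by (intro hull_minimal) (auto simp: dictionary_def)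
  then show ?thesis unfolding A1_def by (simp add: closure_minimal)
qed

lemma A1_inner_le:
  assumes "\<And>h. h \<in> D \<Longrightarrow> inner r h \<le> t" "x \<in> A1 D"
  shows "inner r x \<le> t"
proof -
  have "convex hull D \<subseteq> {x. inner r x \<le> t}"
    using assms(1) by (intro hull_minimal) (auto simp: convex_halfspace_le)
  then have "A1 D \<subseteq> {x. inner r x \<le> t}"
    unfolding A1_def by (simp add: closure_minimal closed_halfspace_le)
  then show ?thesis using assms(2) by blast
qed

lemma A1_norm_le:
  "M > 0 \<Longrightarrow> f /\<^sub>R M \<in> A1 D \<Longrightarrow> A1_norm D f \<le> ereal M"
  unfolding A1_norm_def by (rule Inf_lower) auto

lemma A1_norm_greatest:
  "(\<And>M. M > 0 \<Longrightarrow> f /\<^sub>R M \<in> A1 D \<Longrightarrow> t \<le> M) \<Longrightarrow> ereal t \<le> A1_norm D f"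
  unfolding A1_norm_def by (rule Inf_greatest) auto

lemma norm_le_A1_norm:
  assumes "dictionary D"
  shows "ereal (norm f) \<le> A1_norm D f"
proof (rule A1_norm_greatest)
  fix M :: real assume "M > 0" "f /\<^sub>R M \<in> A1 D"
  then have "norm (f /\<^sub>R M) \<le> 1" using A1_subset_cball[OF assms] by auto
  with \<open>M > 0\<close> show "norm f \<le> M" by (simp add: field_simps)
qed

lemma A1_norm_real:
  assumes "dictionary D" "A1_norm D f < \<infinity>"
  obtains A where "A1_norm D f = ereal A" "norm f \<le> A"
proof -
  have "ereal (norm f) \<le> A1_norm D f" by (rule norm_le_A1_norm[OF assms(1)])
  with assms(2) show ?thesis using that by (cases "A1_norm D f") auto
qed

lemma norm_diff_inner_scaleR_unit:
  assumes "norm u = 1"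
  shows "(norm (r - inner r u *\<^sub>R u))\<^sup>2 = (norm r)\<^sup>2 - (inner r u)\<^sup>2"
proof -
  have "inner u u = 1" using assms by (simp add: norm_eq_sqrt_inner)
  then show ?thesis
    unfolding power2_norm_eq_inner
    by (simp add: inner_diff_left inner_diff_right inner_commute[of u r] power2_eq_square)
qed

lemma OGA_residual_step:
  fixes f :: "'a::real_inner"
  assumes D: "dictionary D" and g: "OGA_realization D f m g" and k: "k < m"
    and M: "M > 0" "f /\<^sub>R M \<in> A1 D"
  shows "(norm (f - OGA_approx f g (Suc k)))\<^sup>2
         \<le> (norm (f - OGA_approx f g k))\<^sup>2 - ((norm (f - OGA_approx f g k))\<^sup>2)\<^sup>2 / M\<^sup>2"
proof -
  define r where "r = f - OGA_approx f g k"
  define t where "t = inner r (g k)"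
  have greedy: "g k \<in> D" "\<And>h. h \<in> D \<Longrightarrow> inner r h \<le> t"
    using g k unfolding OGA_realization_def r_def t_def by simp_all
  have "inner r (OGA_approx f g k) = 0"
    unfolding r_def OGA_approx_def by (intro orth_proj_span) auto
  then have "inner r f = (norm r)\<^sup>2"
    by (simp add: r_def inner_diff_right power2_norm_eq_inner)
  moreover have "inner r (f /\<^sub>R M) \<le> t" using A1_inner_le[OF greedy(2) M(2)] .
  ultimately have lower: "(norm r)\<^sup>2 / M \<le> t" by (simp add: divide_inverse mult.commute)
  have span_k: "span (g ` {..<k}) \<subseteq> span (g ` {..<Suc k})"
    by (intro span_mono image_mono) auto
  have "OGA_approx f g k + t *\<^sub>R g k \<in> span (g ` {..<Suc k})"
    using span_k orth_proj_span(1)[of "g ` {..<k}" f]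
    by (intro span_add span_scale) (auto simp: OGA_approx_def span_base)
  then have "norm (f - OGA_approx f g (Suc k)) \<le> norm (r - t *\<^sub>R g k)"
    unfolding OGA_approx_def r_def by (simp add: orth_proj_span_nearest diff_diff_eq)
  then have "(norm (f - OGA_approx f g (Suc k)))\<^sup>2 \<le> (norm (r - t *\<^sub>R g k))\<^sup>2"
    by (simp add: power_mono)
  also have "\<dots> = (norm r)\<^sup>2 - t\<^sup>2"
    unfolding t_def
    by (rule norm_diff_inner_scaleR_unit) (use D greedy(1) in \<open>simp add: dictionary_def\<close>)
  finally have "(norm (f - OGA_approx f g (Suc k)))\<^sup>2 \<le> (norm r)\<^sup>2 - t\<^sup>2" .
  moreover have "((norm r)\<^sup>2 / M)\<^sup>2 \<le> t\<^sup>2"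
    using lower M(1) by (intro power_mono) auto
  ultimately show ?thesis by (simp add: r_def power_divide)
qed

lemma decay_by_square_bound:
  fixes a :: "nat \<Rightarrow> real"
  assumes B: "B > 0" and a0: "a 0 \<le> B" and nonneg: "\<And>k. k \<le> m \<Longrightarrow> 0 \<le> a k"
    and step: "\<And>k. k < m \<Longrightarrow> a (Suc k) \<le> a k - (a k)\<^sup>2 / B"
    and "k \<le> m"
  shows "a k \<le> B / (real k + 1)"
  using \<open>k \<le> m\<close>
proof (induction k)
  case 0
  show ?case using a0 by simp
next
  case (Suc k)
  then have IH: "a k \<le> B / (real k + 1)" and step_k: "a (Suc k) \<le> a k - (a k)\<^sup>2 / B"
    and "0 \<le> a k" using step nonneg by auto
  show ?case
  proof (cases "a k \<le> B / (real k + 2)")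
    case True
    have "0 \<le> (a k)\<^sup>2 / B" using B by simp
    then have "a (Suc k) \<le> a k" using step_k by linarith
    with True show ?thesis by (simp add: add.commute)
  next
    case False
    have "B / (real k + 1) \<le> B" using B by (simp add: divide_le_eq)
    then have "0 \<le> 1 - a k / B" using IH B by simp
    have "a k - (a k)\<^sup>2 / B = a k * (1 - a k / B)"
      using B by (simp add: power2_eq_square field_simps)
    also have "\<dots> \<le> B / (real k + 1) * (1 - 1 / (real k + 2))"
      using False B IH \<open>0 \<le> 1 - a k / B\<close>
      by (intro mult_mono) (auto simp: field_simps)
    also have "1 - 1 / (real k + 2) = (real k + 1) / (real k + 2)"
      by (simp add: field_simps)
    also have "B / (real k + 1) * ((real k + 1) / (real k + 2)) = B / (real (Suc k) + 1)"
      by (simp add: add.commute)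
    finally show ?thesis using step_k by simp
  qed
qed

lemma OGA_approx_0 [simp]: "OGA_approx f g 0 = 0"
  unfolding OGA_approx_def by (rule orth_proj_eqI) auto

lemma OGA_residual_le_norm:
  fixes f :: "'a::real_inner"
  shows "norm (f - OGA_approx f g m) \<le> norm f"
  using orth_proj_span_nearest[of "g ` {..<m}" 0 f] by (simp add: OGA_approx_def span_zero)

lemma OGA_residual_rate:
  fixes f :: "'a::real_inner"
  assumes D: "dictionary D" and g: "OGA_realization D f m g"
    and M: "M > 0" "f /\<^sub>R M \<in> A1 D"
  shows "norm (f - OGA_approx f g m) \<le> M / sqrt (real m + 1)"
proof -
  define a where "a k = (norm (f - OGA_approx f g k))\<^sup>2" for k
  have "norm (f /\<^sub>R M) \<le> 1" using A1_subset_cball[OF D] M(2) by auto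
  then have "norm f \<le> M" using M(1) by (simp add: field_simps)
  then have "a 0 \<le> M\<^sup>2" by (simp add: a_def power_mono)
  then have "a m \<le> M\<^sup>2 / (real m + 1)"
    using M OGA_residual_step[OF D g _ M]
    by (intro decay_by_square_bound[of "M\<^sup>2" a m]) (auto simp: a_def)
  then have "sqrt (a m) \<le> sqrt (M\<^sup>2 / (real m + 1))" by (rule real_sqrt_le_mono)
  then show ?thesis using M(1) by (simp add: a_def real_sqrt_divide)
qed

lemma powr_interpolation:
  fixes x a b \<theta> :: real
  assumes "0 \<le> x" "x \<le> a" "x \<le> b" "0 \<le> \<theta>" "\<theta> \<le> 1"
  shows "x \<le> a powr (1 - \<theta>) * b powr \<theta>"
proof (cases "x = 0")
  case True
  then show ?thesis by simp
next
  case False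
  then have "x = x powr (1 - \<theta>) * x powr \<theta>"
    using assms(1) by (simp flip: powr_add)
  also have "\<dots> \<le> a powr (1 - \<theta>) * b powr \<theta>"
    using assms by (intro mult_mono powr_mono2) auto
  finally show ?thesis .
qed

lemma OGA_interpolated_rate:
  fixes f :: "'a::real_inner"
  assumes D: "dictionary D" and g: "OGA_realization D f m g"
    and M: "M > 0" "f /\<^sub>R M \<in> A1 D" and "m \<ge> 1" "0 \<le> \<alpha>" "\<alpha> \<le> 1"
  shows "norm (f - OGA_approx f g m) \<le> norm f powr (1 - \<alpha>) * M powr \<alpha> * real m powr (-\<alpha>/2)"
proof -
  have "M / sqrt (real m + 1) \<le> M / sqrt (real m)"
    using M(1) \<open>m \<ge> 1\<close> by (intro divide_left_mono) auto
  then have "norm (f - OGA_approx f g m) \<le> norm f powr (1 - \<alpha>) * (M / sqrt (real m)) powr \<alpha>"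
    using OGA_residual_rate[OF D g M] OGA_residual_le_norm assms(6,7)
    by (intro powr_interpolation) auto
  also have "(M / sqrt (real m)) powr \<alpha> = M powr \<alpha> * real m powr (-\<alpha>/2)"
    using M(1) \<open>m \<ge> 1\<close>
    by (simp add: powr_divide powr_half_sqrt[symmetric] powr_powr powr_minus_divide)
  finally show ?thesis by (simp add: mult.assoc)
qed

lemma le_A1_norm_powr:
  assumes A: "A1_norm D f = ereal A" and "0 < \<alpha>" "0 \<le> c"
    and bound: "\<And>M. M > 0 \<Longrightarrow> f /\<^sub>R M \<in> A1 D \<Longrightarrow> c \<le> M powr \<alpha>"
  shows "c \<le> A powr \<alpha>"
proof -
  have "c powr (1/\<alpha>) \<le> M" if "M > 0" "f /\<^sub>R M \<in> A1 D" for M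
  proof -
    have "c powr (1/\<alpha>) \<le> (M powr \<alpha>) powr (1/\<alpha>)"
      using bound[OF that] \<open>0 < \<alpha>\<close> \<open>0 \<le> c\<close> by (intro powr_mono2) auto
    also have "\<dots> = M" using \<open>0 < \<alpha>\<close> \<open>M > 0\<close> by (simp add: powr_powr)
    finally show ?thesis .
  qed
  then have "c powr (1/\<alpha>) \<le> A" using A1_norm_greatest[of f D] A by simp
  then have "(c powr (1/\<alpha>)) powr \<alpha> \<le> A powr \<alpha>" using \<open>0 < \<alpha>\<close> by (intro powr_mono2) auto
  then show ?thesis using \<open>0 < \<alpha>\<close> \<open>0 \<le> c\<close> by (cases "c = 0") (auto simp: powr_powr)
qed

lemma OGA_ratio_le:
  fixes f :: "'a::real_inner"
  assumes D: "dictionary D" and "f \<noteq> 0" and fin: "A1_norm D f < \<infinity>"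
    and g: "OGA_realization D f m g" and "m \<ge> 1" "0 < \<alpha>" "\<alpha> \<le> 1"
  shows "norm (f - OGA_approx f g m) / (norm f powr (1 - \<alpha>) * real_of_ereal (A1_norm D f) powr \<alpha>)
         \<le> real m powr (-\<alpha>/2)"
proof -
  obtain A where A: "A1_norm D f = ereal A" "norm f \<le> A" using A1_norm_real[OF D fin] .
  define x where "x = norm (f - OGA_approx f g m)"
  define P where "P = norm f powr (1 - \<alpha>)"
  define Q where "Q = real m powr (-\<alpha>/2)"
  have "P > 0" "Q > 0" using \<open>f \<noteq> 0\<close> \<open>m \<ge> 1\<close> by (auto simp: P_def Q_def)
  have "A > 0" using \<open>f \<noteq> 0\<close> A(2) by (metis zero_less_norm_iff order_less_le_trans)
  have "x / (P * Q) \<le> A powr \<alpha>"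
  proof (rule le_A1_norm_powr[OF A(1) \<open>0 < \<alpha>\<close>])
    show "0 \<le> x / (P * Q)" using \<open>P > 0\<close> \<open>Q > 0\<close> by (simp add: x_def)
    fix M :: real assume "M > 0" "f /\<^sub>R M \<in> A1 D"
    then have "x \<le> P * M powr \<alpha> * Q"
      unfolding x_def P_def Q_def using assms by (intro OGA_interpolated_rate) auto
    then show "x / (P * Q) \<le> M powr \<alpha>"
      using \<open>P > 0\<close> \<open>Q > 0\<close> by (simp add: divide_le_eq mult_ac)
  qed
  then have "x / (P * A powr \<alpha>) \<le> Q"
    using \<open>P > 0\<close> \<open>Q > 0\<close> \<open>A > 0\<close> by (simp add: divide_le_eq mult_ac)
  then show ?thesis by (simp add: x_def P_def Q_def A(1))
qed

section \<open>An extremal example\<close>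

definition orthonormal_dictionary :: "nat \<Rightarrow> (nat \<Rightarrow> 'a::real_inner) \<Rightarrow> 'a set" where
  "orthonormal_dictionary n e = e ` {..<n} \<union> uminus ` e ` {..<n}
     \<union> {u. norm u = 1 \<and> (\<forall>i<n. inner (e i) u = 0)}"

lemma dictionary_orthonormal_dictionary:
  assumes e: "orthonormal_family n e"
  shows "dictionary (orthonormal_dictionary n e)"
  unfolding dictionary_def
proof (intro conjI ballI)
  let ?D = "orthonormal_dictionary n e"
  show "norm g = 1" if "g \<in> ?D" for g
    using that orthonormal_family_norm[OF e] by (auto simp: orthonormal_dictionary_def)
  show "- g \<in> ?D" if "g \<in> ?D" for g
    using that by (auto simp: orthonormal_dictionary_def)
  have "x \<in> span ?D" for x
  proof -
    let ?p = "orth_proj (span (e ` {..<n})) x"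
    have "e ` {..<n} \<subseteq> ?D" by (auto simp: orthonormal_dictionary_def)
    then have "?p \<in> span ?D"
      using orth_proj_span(1)[of "e ` {..<n}" x] span_mono by blast
    moreover have "x - ?p \<in> span ?D"
    proof (cases "x - ?p = 0")
      case False
      have "inner (e i) (x - ?p) = 0" if "i < n" for i
        using orth_proj_span(2)[of "e ` {..<n}" "e i" x] that by (simp add: span_base inner_commute)
      with False have "(x - ?p) /\<^sub>R norm (x - ?p) \<in> ?D"
        by (simp add: orthonormal_dictionary_def)
      then have "norm (x - ?p) *\<^sub>R ((x - ?p) /\<^sub>R norm (x - ?p)) \<in> span ?D"
        by (intro span_scale span_base)
      with False show ?thesis by simp
    qed (simp add: span_zero)
    ultimately show ?thesis using span_add by fastforce
  qed
  then have "span ?D = UNIV" by blast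
  then show "closure (span ?D) = UNIV" by simp
qed

lemma OGA_residual_orthonormal_sum:
  assumes e: "orthonormal_family n e" and "k \<le> n"
  shows "(\<Sum>i<n. e i) - OGA_approx (\<Sum>i<n. e i) e k = (\<Sum>i\<in>{k..<n}. e i)"
proof -
  have "inner (\<Sum>i<n. e i) (e i) = 1" if "i < n" for i
    using inner_sum_orthonormal[OF e order_refl that, of "\<lambda>_. 1"] that by simp
  then have "OGA_approx (\<Sum>i<n. e i) e k = (\<Sum>i<k. e i)"
    using \<open>k \<le> n\<close> unfolding OGA_approx_def orthonormal_family_mono[OF e \<open>k \<le> n\<close>, THEN orth_proj_orthonormal]
    by simp
  moreover have "(\<Sum>i<n. e i) = (\<Sum>i<k. e i) + (\<Sum>i\<in>{k..<n}. e i)"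
    using \<open>k \<le> n\<close> by (metis sum.atLeastLessThan_concat lessThan_atLeast0 zero_le)
  ultimately show ?thesis by simp
qed

lemma OGA_realization_orthonormal_dictionary:
  assumes e: "orthonormal_family n e" and "m \<le> n"
  shows "OGA_realization (orthonormal_dictionary n e) (\<Sum>i<n. e i) m e"
  unfolding OGA_realization_def
proof (intro allI impI conjI ballI)
  fix k assume "k < m"
  then have "k < n" using \<open>m \<le> n\<close> by simp
  then show "e k \<in> orthonormal_dictionary n e" by (simp add: orthonormal_dictionary_def)
  define r where "r = (\<Sum>i<n. e i) - OGA_approx (\<Sum>i<n. e i) e k"
  have r: "r = (\<Sum>i\<in>{k..<n}. 1 *\<^sub>R e i)"
    unfolding r_def using OGA_residual_orthonormal_sum[OF e] \<open>k < n\<close> by simp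
  have inner_e: "inner r (e j) = (if j \<in> {k..<n} then 1 else 0)" if "j < n" for j
    unfolding r by (rule inner_sum_orthonormal[OF e _ that]) auto
  fix h assume "h \<in> orthonormal_dictionary n e"
  then have "inner r h \<le> 1"
    unfolding orthonormal_dictionary_def
  proof (elim UnE)
    assume "h \<in> {u. norm u = 1 \<and> (\<forall>i<n. inner (e i) u = 0)}"
    then show "inner r h \<le> 1" by (simp add: r inner_sum_left)
  qed (auto simp: inner_e)
  moreover have "inner r (e k) = 1" using inner_e \<open>k < n\<close> by simp
  ultimately show "inner r h \<le> inner r (e k)" by simp
qed

lemma norm_sum_orthonormal:
  assumes e: "orthonormal_family n e" and I: "I \<subseteq> {..<n}"
  shows "norm (\<Sum>i\<in>I. e i) = sqrt (real (card I))"
proof -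
  have "inner (\<Sum>i\<in>I. e i) (e j) = 1" if "j \<in> I" for j
    using inner_sum_orthonormal[OF e I, of j "\<lambda>_. 1"] that I by auto
  then have "(norm (\<Sum>i\<in>I. e i))\<^sup>2 = (\<Sum>j\<in>I. 1)"
    unfolding power2_norm_eq_inner inner_sum_right[of "\<Sum>i\<in>I. e i"] by simp
  also have "\<dots> = real (card I)" by simp
  finally show ?thesis by (simp add: real_sqrt_unique)
qed

lemma A1_norm_orthonormal_sum:
  assumes e: "orthonormal_family n e" and "n > 0"
  shows "A1_norm (orthonormal_dictionary n e) (\<Sum>i<n. e i) \<le> ereal (real n)"
proof (rule A1_norm_le)
  have "(\<Sum>i<n. e i) /\<^sub>R real n = (\<Sum>i<n. (1 / real n) *\<^sub>R e i)"
    by (simp add: scaleR_sum_right divide_inverse_commute)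
  also have "\<dots> \<in> convex hull (orthonormal_dictionary n e)"
    using \<open>n > 0\<close>
    by (intro convex_sum convex_convex_hull hull_inc) (auto simp: orthonormal_dictionary_def)
  finally show "(\<Sum>i<n. e i) /\<^sub>R real n \<in> A1 (orthonormal_dictionary n e)"
    unfolding A1_def using closure_subset by blast
qed (use \<open>n > 0\<close> in simp)

lemma lower_ratio_bound:
  fixes t A \<alpha> :: real
  assumes "t > 0" "0 \<le> \<alpha>" "\<alpha> \<le> 1" "0 < A" "A \<le> 2 * t"
  shows "1/2 * t powr (-\<alpha>/2) \<le> sqrt t / (sqrt (2 * t) powr (1 - \<alpha>) * A powr \<alpha>)"
proof -
  have "sqrt (2 * t) powr (1 - \<alpha>) * A powr \<alpha> \<le> (2 * t) powr ((1 - \<alpha>) / 2) * (2 * t) powr \<alpha>"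
    using assms by (auto simp: powr_half_sqrt[symmetric] powr_powr intro!: mult_left_mono powr_mono2)
  also have "\<dots> = (2 * t) powr ((1 + \<alpha>) / 2)"
    by (simp flip: powr_add add: field_simps)
  also have "\<dots> = 2 powr ((1 + \<alpha>) / 2) * t powr ((1 + \<alpha>) / 2)"
    using \<open>t > 0\<close> by (simp add: powr_mult)
  also have "\<dots> \<le> 2 * t powr ((1 + \<alpha>) / 2)"
    using \<open>\<alpha> \<le> 1\<close> powr_mono[of "(1 + \<alpha>) / 2" 1 2] by (simp add: mult_right_mono)
  finally have den: "sqrt (2 * t) powr (1 - \<alpha>) * A powr \<alpha> \<le> 2 * t powr ((1 + \<alpha>) / 2)" .
  have "1/2 - (1 + \<alpha>) / 2 = -\<alpha>/2" by (simp add: field_simps)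
  then have "t powr (-\<alpha>/2) = t powr (1/2) / t powr ((1 + \<alpha>) / 2)"
    unfolding powr_diff[symmetric] by simp
  then have "1/2 * t powr (-\<alpha>/2) = sqrt t / (2 * t powr ((1 + \<alpha>) / 2))"
    using \<open>t > 0\<close> by (simp add: powr_half_sqrt)
  also have "\<dots> \<le> sqrt t / (sqrt (2 * t) powr (1 - \<alpha>) * A powr \<alpha>)"
    using den assms by (intro divide_left_mono) auto
  finally show ?thesis .
qed

lemma OGA_lower_bound_witness:
  assumes "\<not> (\<exists>S::'a::real_inner set. finite S \<and> span S = UNIV)"
    and "m \<ge> 1" "0 \<le> \<alpha>" "\<alpha> \<le> 1"
  shows "\<exists>D (f::'a) g. dictionary D \<and> f \<noteq> 0 \<and> A1_norm D f < \<infinity> \<and> OGA_realization D f m g \<and>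
           1/2 * real m powr (-\<alpha>/2)
             \<le> norm (f - OGA_approx f g m) / (norm f powr (1 - \<alpha>) * real_of_ereal (A1_norm D f) powr \<alpha>)"
proof -
  obtain e :: "nat \<Rightarrow> 'a" where e: "orthonormal_family (2 * m) e"
    using orthonormal_family_exists[OF assms(1)] by blast
  define D where "D = orthonormal_dictionary (2 * m) e"
  define f where "f = (\<Sum>i<2 * m. e i)"
  have D: "dictionary D" unfolding D_def by (rule dictionary_orthonormal_dictionary[OF e])
  have "norm f = sqrt (real (2 * m))"
    unfolding f_def using norm_sum_orthonormal[OF e, of "{..<2 * m}"] by simp
  then have norm_f: "norm f = sqrt (2 * real m)" and "f \<noteq> 0" using \<open>m \<ge> 1\<close> by auto
  have residual: "norm (f - OGA_approx f e m) = sqrt (real m)"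
    unfolding f_def OGA_residual_orthonormal_sum[OF e, of m, simplified]
    using norm_sum_orthonormal[OF e, of "{m..<2 * m}"] by (simp add: subset_eq)
  have realization: "OGA_realization D f m e"
    unfolding D_def f_def by (rule OGA_realization_orthonormal_dictionary[OF e]) simp
  have A1: "A1_norm D f \<le> ereal (real (2 * m))"
    unfolding D_def f_def using \<open>m \<ge> 1\<close> by (intro A1_norm_orthonormal_sum[OF e]) simp
  then have "A1_norm D f < \<infinity>" by (rule le_less_trans) simp
  then obtain A where A: "A1_norm D f = ereal A" "norm f \<le> A" using A1_norm_real[OF D] by blast
  have "0 < A" using A(2) \<open>f \<noteq> 0\<close> by (metis zero_less_norm_iff order_less_le_trans)
  moreover have "A \<le> 2 * real m" using A(1) A1 by simp
  ultimately have "1/2 * real m powr (-\<alpha>/2)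
      \<le> norm (f - OGA_approx f e m) / (norm f powr (1 - \<alpha>) * real_of_ereal (A1_norm D f) powr \<alpha>)"
    unfolding residual norm_f A(1) real_of_ereal.simps using assms(2-4)
    by (intro lower_ratio_bound) auto
  then show ?thesis using D \<open>f \<noteq> 0\<close> \<open>A1_norm D f < \<infinity>\<close> realization by blast
qed

theorem mainTheorem4:
  assumes "\<not> (\<exists>S::('a::{real_inner,complete_space}) set. finite S \<and> span S = UNIV)"
    and "m \<ge> 1" and "0 < \<alpha>" and "\<alpha> \<le> 1"
  shows "ereal (1/2 * real m powr (-\<alpha>/2)) \<le> gamma_o m \<alpha> TYPE('a)
       \<and> gamma_o m \<alpha> TYPE('a) \<le> ereal (real m powr (-\<alpha>/2))"
proof
  obtain D and f :: 'a and g where "dictionary D" "f \<noteq> 0" "A1_norm D f < \<infinity>" "OGA_realization D f m g"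
    and "1/2 * real m powr (-\<alpha>/2)
           \<le> norm (f - OGA_approx f g m) / (norm f powr (1 - \<alpha>) * real_of_ereal (A1_norm D f) powr \<alpha>)"
    using OGA_lower_bound_witness[OF assms(1,2) less_imp_le[OF assms(3)] assms(4)] by blast
  then show "ereal (1/2 * real m powr (-\<alpha>/2)) \<le> gamma_o m \<alpha> TYPE('a)"
    unfolding gamma_o_def by (intro Sup_upper2[OF CollectI]) (blast, simp)
  show "gamma_o m \<alpha> TYPE('a) \<le> ereal (real m powr (-\<alpha>/2))"
    unfolding gamma_o_def
  proof (rule Sup_least, elim CollectE exE conjE)
    fix z D g and f :: 'a
    assume "z = ereal (norm (f - OGA_approx f g m) /
                (norm f powr (1 - \<alpha>) * real_of_ereal (A1_norm D f) powr \<alpha>))"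
      and "dictionary D" "f \<noteq> 0" "A1_norm D f < \<infinity>" "OGA_realization D f m g"
    with OGA_ratio_le assms(2-4) show "z \<le> ereal (real m powr (-\<alpha>/2))" by simp
  qed
qed

end
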